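(* Let $f\in\mathcal B$ be not an extreme point of $\mathcal B$, and let $A_n,B_n$ be its Schur polynomials. Then there exist analytic functions $a,b$ on $\mathbb D$ such that $A_n\to a$ and $B_n\to b$ uniformly on compact subsets of $\mathbb D$ as $n\to\infty$, and $a=bf$. Moreover $A_n^*\to0$ and $B_n^*\to0$ uniformly on compact subsets of $\mathbb D$.
   Context: $\mathbb D=\{|z|<1\}$; $\mathcal B$ is the set of analytic $f$ on $\mathbb D$ with $|f|<1$ on $\mathbb D$. An element $f\in\mathcal B$ is an extreme point of $\mathcal B$ if it is not a proper convex combination $tg+(1-t)h$, $0<t<1$, of two distinct $g,h\in\mathcal B$. (A non-extreme $f$ is not a finite Blaschke product, so the Schur algorithm below never terminates.) For a polynomial $p$ indexed by $n$, $p^*(z)=z^n\overline{p(1/\bar z)}$ (reversal with respect to degree $n$). Schur algorithm: $f_0=f$, $\gamma_n=f_n(0)$, $f_{n+1}(z)=\frac1z\frac{f_n(z)-\gamma_n}{1-\overline{\gamma_n}f_n(z)}$. Schur polynomials: $A_0=\gamma_0$, $B_0=1$, and for $n\ge1$, $A_n=A_{n-1}+z\gamma_nB_{n-1}^*$, $B_n=B_{n-1}+z\gamma_nA_{n-1}^*$. *)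

theory Defs
  imports "HOL-Complex_Analysis.Complex_Analysis" "HOL-Computational_Algebra.Polynomial"
begin

definition schur_class :: "(complex \<Rightarrow> complex) set" where
  "schur_class = {f. f holomorphic_on ball 0 1 \<and> (\<forall>z\<in>ball 0 1. norm (f z) < 1)}"

definition schur_extreme :: "(complex \<Rightarrow> complex) \<Rightarrow> bool" where
  "schur_extreme f \<longleftrightarrow> f \<in> schur_class \<and>
     \<not> (\<exists>g h t. g \<in> schur_class \<and> h \<in> schur_class \<and> (\<exists>z\<in>ball 0 1. g z \<noteq> h z) \<and>
          0 < t \<and> t < 1 \<and>
          (\<forall>z\<in>ball 0 1. f z = complex_of_real t * g z + complex_of_real (1 - t) * h z))"

text \<open>Schur algorithm. The value at 0 of f_{n+1} is the value of the removable
  singularity, i.e. the derivative at 0 of the Moebius-transformed function.\<close>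
primrec schur_iter :: "(complex \<Rightarrow> complex) \<Rightarrow> nat \<Rightarrow> complex \<Rightarrow> complex" where
  "schur_iter f 0 = f"
| "schur_iter f (Suc n) =
     (let g = schur_iter f n;
          m = (\<lambda>w. (g w - g 0) / (1 - cnj (g 0) * g w))
      in (\<lambda>z. if z = 0 then deriv m 0 else m z / z))"

definition schur_param :: "(complex \<Rightarrow> complex) \<Rightarrow> nat \<Rightarrow> complex" where
  "schur_param f n = schur_iter f n 0"

text \<open>Reversal p^*(z) = z^n conj(p(1/conj z)) of a polynomial of degree at most n.\<close>
definition poly_star :: "nat \<Rightarrow> complex poly \<Rightarrow> complex poly" where
  "poly_star n p = (\<Sum>i\<le>n. monom (cnj (coeff p (n - i))) i)"

fun schur_AB :: "(complex \<Rightarrow> complex) \<Rightarrow> nat \<Rightarrow> complex poly \<times> complex poly" where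
  "schur_AB f 0 = ([:schur_param f 0:], 1)"
| "schur_AB f (Suc n) =
     (let A = fst (schur_AB f n); B = snd (schur_AB f n); g = schur_param f (Suc n)
      in (A + smult g (pCons 0 (poly_star n B)), B + smult g (pCons 0 (poly_star n A))))"

definition schur_A :: "(complex \<Rightarrow> complex) \<Rightarrow> nat \<Rightarrow> complex poly" where
  "schur_A f n = fst (schur_AB f n)"

definition schur_B :: "(complex \<Rightarrow> complex) \<Rightarrow> nat \<Rightarrow> complex poly" where
  "schur_B f n = snd (schur_AB f n)"

end

theory Submission
  imports Defs
begin

text \<open>
  If \<open>f = t g + (1 - t) h\<close> with \<open>g \<noteq> h\<close> in the Schur class, then \<open>\<phi> = sqrt (t (1 - t)) (g - h)\<close>
  is a mate of \<open>f\<close>: a holomorphic function with \<open>\<bar>f\<bar>\<^sup>2 + \<bar>\<phi>\<bar>\<^sup>2 \<le> 1\<close> on the disc, and by the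
  maximum principle its zero at \<open>0\<close> may be divided out. A mate survives the Schur algorithm:
  \<open>\<phi> E\<^sub>n / sqrt P\<^sub>n\<close> is a mate of the \<open>n\<close>-th iterate \<open>f\<^sub>n\<close>, where
  \<open>E\<^sub>n = \<Prod>k<n. 1 + cnj \<gamma>\<^sub>k z f\<^sub>k\<^sub>+\<^sub>1\<close> and \<open>P\<^sub>n = \<Prod>k<n. 1 - \<bar>\<gamma>\<^sub>k\<bar>\<^sup>2\<close>.
  At \<open>z = 0\<close> this gives \<open>P\<^sub>n \<ge> \<bar>\<phi> 0\<bar>\<^sup>2\<close>, so \<open>\<Sum> \<bar>\<gamma>\<^sub>k\<bar>\<^sup>2 < \<infinity>\<close>.

  The pairs \<open>(B\<^sub>n, A\<^sub>n\<^sup>*)\<close> and \<open>(A\<^sub>n, B\<^sub>n\<^sup>*)\<close> obey a hyperbolic recursion whose energy identity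
  bounds \<open>\<bar>\<phi> 0\<bar>\<^sup>2 (1 - \<bar>z\<bar>\<^sup>2) \<Sum>k<n. \<bar>A\<^sub>k\<^sup>*\<bar>\<^sup>2\<close> by \<open>\<bar>B\<^sub>n\<bar>\<^sup>2 + 1\<close>, and similarly with
  \<open>A\<close> and \<open>B\<close> exchanged. The identity \<open>B\<^sub>n + z A\<^sub>n\<^sup>* f\<^sub>n\<^sub>+\<^sub>1 = E\<^sub>n\<^sub>+\<^sub>1\<close> together with
  \<open>\<bar>\<phi> E\<^sub>n\<^sub>+\<^sub>1\<bar> \<le> 1\<close> bounds \<open>A\<^sub>n\<close> and \<open>B\<^sub>n\<close> on circles avoiding the zeros of \<open>\<phi>\<close>, hence
  locally uniformly. Then the square summability of the \<open>\<gamma>\<^sub>k\<close> makes \<open>A\<^sub>n\<close>, \<open>B\<^sub>n\<close> locally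
  uniformly Cauchy and drives \<open>A\<^sub>n\<^sup>*\<close>, \<open>B\<^sub>n\<^sup>*\<close> to \<open>0\<close>; finally
  \<open>A\<^sub>n - f B\<^sub>n = z f\<^sub>n\<^sub>+\<^sub>1 (f A\<^sub>n\<^sup>* - B\<^sub>n\<^sup>*) \<longrightarrow> 0\<close>.
\<close>

lemma cmod_lincomb_sq_le:
  fixes \<alpha> \<beta> a b :: complex
  shows "norm (\<alpha> * a + \<beta> * b)^2 \<le> (norm \<alpha>^2 + norm \<beta>^2) * (norm a^2 + norm b^2)"
proof -
  have "norm (\<alpha> * a + \<beta> * b) \<le> norm \<alpha> * norm a + norm \<beta> * norm b"
    by (metis norm_mult norm_triangle_ineq)
  then have "norm (\<alpha> * a + \<beta> * b)^2 \<le> (norm \<alpha> * norm a + norm \<beta> * norm b)^2"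
    by (simp add: power_mono)
  also have "\<dots> \<le> (norm \<alpha>^2 + norm \<beta>^2) * (norm a^2 + norm b^2)"
    using zero_le_power2[of "norm \<alpha> * norm b - norm \<beta> * norm a"]
    by (simp add: power2_eq_square algebra_simps)
  finally show ?thesis .
qed

lemma cmod_convex_comb_sq:
  fixes g h :: complex and t :: real
  shows "norm (of_real t * g + of_real (1 - t) * h)^2 + t * (1 - t) * norm (g - h)^2
           = t * norm g^2 + (1 - t) * norm h^2"
proof -
  have "complex_of_real (norm (of_real t * g + of_real (1 - t) * h)^2 + t * (1 - t) * norm (g - h)^2)
      = complex_of_real (t * norm g^2 + (1 - t) * norm h^2)"
    by (simp only: of_real_add of_real_mult of_real_diff of_real_1 complex_norm_square)
       (simp add: algebra_simps)
  then show ?thesis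
    using of_real_eq_iff by blast
qed

lemma cmod_moebius_defect:
  fixes h c :: complex
  shows "norm (h - c)^2 + (1 - norm h^2) * (1 - norm c^2) = norm (1 - cnj c * h)^2"
proof -
  have "complex_of_real (norm (h - c)^2 + (1 - norm h^2) * (1 - norm c^2))
      = complex_of_real (norm (1 - cnj c * h)^2)"
    by (simp only: of_real_add of_real_mult of_real_diff of_real_1 complex_norm_square)
       (simp add: algebra_simps)
  then show ?thesis
    using of_real_eq_iff by blast
qed

lemma cmod_hyperbolic_step:
  fixes x y g w :: complex
  shows "norm (x + g * w * y)^2 - norm (cnj g * x + w * y)^2
           = (1 - norm g^2) * (norm x^2 - norm w^2 * norm y^2)"
proof -
  have "complex_of_real (norm (x + g * w * y)^2 - norm (cnj g * x + w * y)^2)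
      = complex_of_real ((1 - norm g^2) * (norm x^2 - norm w^2 * norm y^2))"
    by (simp only: of_real_add of_real_mult of_real_diff of_real_1 complex_norm_square)
       (simp add: algebra_simps)
  then show ?thesis
    using of_real_eq_iff by blast
qed

lemma norm_le_absorb:
  fixes x y u e w :: complex
  assumes "x + w * y * u = e" "norm y \<le> norm x + 1" "norm u \<le> 1" "norm w \<le> r" "r < 1"
  shows "norm x \<le> (norm e + 1) / (1 - r)"
proof -
  have r: "0 \<le> r"
    using assms(4) norm_ge_zero order_trans by blast
  have "x = e - w * y * u"
    using assms(1) by (simp add: algebra_simps)
  then have "norm x \<le> norm e + norm w * norm y * norm u"
    using norm_triangle_ineq4[of e "w * y * u"] by (simp add: norm_mult)
  also have "norm w * norm y * norm u \<le> r * (norm x + 1) * 1"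
    using assms(2-4) r by (intro mult_mono) auto
  finally have "norm x * (1 - r) \<le> norm e + r"
    by (simp add: algebra_simps)
  also have "\<dots> \<le> norm e + 1"
    using assms(5) by simp
  finally show ?thesis
    using assms(5) by (simp add: pos_le_divide_eq)
qed

lemma summable_if_prod_one_minus_bounded_below:
  fixes a :: "nat \<Rightarrow> real"
  assumes a: "\<And>k. 0 \<le> a k" "\<And>k. a k \<le> 1"
    and q: "0 < q" "\<And>n. q \<le> (\<Prod>k<n. 1 - a k)"
  shows "summable a"
proof (rule summableI_nonneg_bounded[of _ "- ln q"])
  fix n
  have "1 - a k \<le> exp (- a k)" for k
    using exp_ge_add_one_self[of "- a k"] by simp
  then have "q \<le> (\<Prod>k<n. exp (- a k))"
    using a by (intro order_trans[OF q(2) prod_mono]) simp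
  also have "\<dots> = exp (- (\<Sum>k<n. a k))"
    by (simp add: exp_sum[symmetric] sum_negf)
  finally have "ln q \<le> - (\<Sum>k<n. a k)"
    using ln_le_cancel_iff[of q "exp (- (\<Sum>k<n. a k))"] q(1) by simp
  then show "(\<Sum>k<n. a k) \<le> - ln q"
    by simp
qed (use a in simp)

lemma uniformly_Cauchy_on_if_square_summable_steps:
  fixes s :: "nat \<Rightarrow> 'a \<Rightarrow> 'b::real_normed_vector"
  assumes step: "\<And>k z. z \<in> S \<Longrightarrow> norm (s (Suc k) z - s k z) \<le> c k * u k z"
    and c: "summable (\<lambda>k. c k ^ 2)"
    and u: "\<And>n z. z \<in> S \<Longrightarrow> (\<Sum>k<n. u k z ^ 2) \<le> M"
  shows "uniformly_Cauchy_on S s"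
proof (rule uniformly_Cauchy_onI')
  fix e :: real
  assume e: "e > 0"
  define M' where "M' = max M 0 + 1"
  have M': "0 < M'" "M \<le> M'"
    by (auto simp: M'_def)
  obtain N where N: "\<And>m n. N \<le> m \<Longrightarrow> norm (\<Sum>k=m..<n. c k ^ 2) < e^2 / M'"
    using c e M' unfolding summable_Cauchy by (meson divide_pos_pos zero_less_power)
  show "\<exists>N. \<forall>z\<in>S. \<forall>m\<ge>N. \<forall>n>m. dist (s m z) (s n z) < e"
  proof (intro exI ballI allI impI)
    fix z m n
    assume z: "z \<in> S" and m: "N \<le> m" and n: "m < n"
    have "(\<Sum>k=m..<n. s (Suc k) z - s k z) = s n z - s m z"
      using n by (intro sum_Suc_diff') simp
    then have "dist (s m z) (s n z) = norm (\<Sum>k=m..<n. s (Suc k) z - s k z)"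
      by (metis dist_commute dist_norm)
    also have "\<dots> \<le> (\<Sum>k=m..<n. c k * u k z)"
      using step[OF z] by (intro order_trans[OF norm_sum sum_mono])
    also have "\<dots> \<le> sqrt ((\<Sum>k=m..<n. c k ^ 2) * (\<Sum>k=m..<n. u k z ^ 2))"
      by (rule real_le_rsqrt) (rule Cauchy_Schwarz_ineq_sum)
    also have "\<dots> < e"
    proof -
      have "(\<Sum>k=m..<n. u k z ^ 2) \<le> (\<Sum>k<n. u k z ^ 2)"
        by (rule sum_mono2) auto
      also have "\<dots> \<le> M'"
        using u[OF z, of n] M' by linarith
      finally have "(\<Sum>k=m..<n. c k ^ 2) * (\<Sum>k=m..<n. u k z ^ 2) \<le> (\<Sum>k=m..<n. c k ^ 2) * M'"
        by (intro mult_left_mono sum_nonneg) auto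
      also have "\<dots> < e^2"
        using N[OF m, of n] M' by (simp add: sum_nonneg pos_less_divide_eq)
      finally show ?thesis
        using real_sqrt_less_mono[of _ "e^2"] e by simp
    qed
    finally show "dist (s m z) (s n z) < e" .
  qed
qed

lemma contracting_iterate_le:
  fixes s :: "nat \<Rightarrow> real"
  assumes r: "0 \<le> r" and \<delta>: "0 \<le> \<delta>" and s: "s N \<le> M"
    and step: "\<And>n. s (Suc n) \<le> r * s n + e n" and e: "\<And>n. N \<le> n \<Longrightarrow> e n \<le> (1 - r) * \<delta>"
  shows "s (N + k) \<le> r^k * M + \<delta>"
proof (induction k)
  case (Suc k)
  have "s (N + Suc k) \<le> r * s (N + k) + e (N + k)"
    using step[of "N + k"] by simp
  also have "\<dots> \<le> r * (r^k * M + \<delta>) + (1 - r) * \<delta>"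
    using mult_left_mono[OF Suc.IH r] e[of "N + k"] by linarith
  also have "\<dots> = r^Suc k * M + \<delta>"
    by (simp add: algebra_simps)
  finally show ?case .
qed (use s \<delta> in simp)

lemma uniform_limit_zero_if_contracting:
  fixes s :: "nat \<Rightarrow> 'a \<Rightarrow> 'b::real_normed_vector"
  assumes r: "0 \<le> r" "r < 1" and M: "\<And>n z. z \<in> S \<Longrightarrow> norm (s n z) \<le> M"
    and step: "\<And>n z. z \<in> S \<Longrightarrow> norm (s (Suc n) z) \<le> r * norm (s n z) + e n"
    and e: "e \<longlonglongrightarrow> 0"
  shows "uniform_limit S s (\<lambda>_. 0) sequentially"
  unfolding uniform_limit_sequentially_iff dist_norm
proof (intro allI impI)
  fix \<epsilon> :: real
  assume \<epsilon>: "\<epsilon> > 0"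
  have "0 < (1 - r) * (\<epsilon> / 2)"
    using \<epsilon> r by simp
  then have "eventually (\<lambda>n. e n < (1 - r) * (\<epsilon> / 2)) sequentially"
    by (rule order_tendstoD(2)[OF e])
  then obtain N where N: "\<And>n. N \<le> n \<Longrightarrow> e n < (1 - r) * (\<epsilon> / 2)"
    unfolding eventually_sequentially by blast
  have "(\<lambda>k. r^k * \<bar>M\<bar>) \<longlonglongrightarrow> 0"
    using r by (intro tendsto_mult_left_zero LIMSEQ_power_zero) auto
  then have "eventually (\<lambda>k. r^k * \<bar>M\<bar> < \<epsilon> / 2) sequentially"
    using \<epsilon> by (intro order_tendstoD(2)) auto
  then obtain K where K: "\<And>k. K \<le> k \<Longrightarrow> r^k * \<bar>M\<bar> < \<epsilon> / 2"
    unfolding eventually_sequentially by blast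
  show "\<exists>N. \<forall>n\<ge>N. \<forall>z\<in>S. norm (s n z - 0) < \<epsilon>"
  proof (intro exI allI impI ballI)
    fix n z
    assume n: "N + K \<le> n" and z: "z \<in> S"
    have "norm (s (N + (n - N)) z) \<le> r^(n - N) * M + \<epsilon> / 2"
      using M[OF z] step[OF z] less_imp_le[OF N] \<epsilon> r(1) by (intro contracting_iterate_le) auto
    moreover have "r^(n - N) * M \<le> r^(n - N) * \<bar>M\<bar>"
      using r by (intro mult_left_mono) auto
    moreover have "r^(n - N) * \<bar>M\<bar> < \<epsilon> / 2"
      using n by (intro K) simp
    ultimately show "norm (s n z - 0) < \<epsilon>"
      using n by simp
  qed
qed

lemma compact_subset_ball_imp_cball:
  fixes K :: "'a::metric_space set"
  assumes "compact K" "K \<subseteq> ball a R"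
  obtains r where "r < R" "K \<subseteq> cball a r"
proof (cases "K = {}")
  case False
  then obtain x where "x \<in> K" "\<And>y. y \<in> K \<Longrightarrow> dist a y \<le> dist a x"
    using distance_attains_sup[OF assms(1)] by blast
  then show thesis
    using assms(2) by (intro that[of "dist a x"]) auto
qed (use that[of "R - 1"] in simp)

lemma holomorphic_bounded_below_on_circle:
  fixes \<phi> :: "complex \<Rightarrow> complex"
  assumes h\<phi>: "\<phi> holomorphic_on ball 0 1" and \<phi>0: "\<phi> 0 \<noteq> 0" and r0: "r0 < 1"
  obtains r \<mu> where "r0 \<le> r" "0 < r" "r < 1" "0 < \<mu>" "\<And>w. norm w = r \<Longrightarrow> \<mu> \<le> norm (\<phi> w)"
proof -
  define \<rho> where "\<rho> = (1 + max r0 (1/2)) / 2"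
  have \<rho>: "max r0 (1/2) < \<rho>" "\<rho> < 1"
    using r0 by (auto simp: \<rho>_def)
  define Z where "Z = {z \<in> cball 0 \<rho>. \<phi> z = 0}"
  have "finite Z"
  proof (cases "\<phi> constant_on ball 0 1")
    case True
    then have "Z = {}"
      using \<phi>0 \<rho> by (auto simp: Z_def constant_on_def)
    then show ?thesis
      by simp
  next
    case False
    show ?thesis
      unfolding Z_def using \<rho>
      by (intro holomorphic_compact_finite_zeros[OF h\<phi> open_ball connected_ball compact_cball _ False]) auto
  qed
  then have "infinite ({max r0 (1/2)<..<\<rho>} - norm ` Z)"
    using \<rho> by (intro Diff_infinite_finite) (auto simp: infinite_Ioo)
  then obtain r where r: "max r0 (1/2) < r" "r < \<rho>" "r \<notin> norm ` Z"
    by (metis Diff_iff greaterThanLessThan_iff infinite_imp_nonempty ex_in_conv)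
  have "sphere 0 r \<subseteq> ball (0::complex) 1"
    using r \<rho> by auto
  then have "continuous_on (sphere 0 r) (\<lambda>w. norm (\<phi> w))"
    using h\<phi> by (intro continuous_intros) (meson holomorphic_on_imp_continuous_on holomorphic_on_subset)
  moreover have "sphere (0::complex) r \<noteq> {}"
    using r by simp
  ultimately obtain w0 where w0: "w0 \<in> sphere 0 r" "\<And>w. w \<in> sphere 0 r \<Longrightarrow> norm (\<phi> w0) \<le> norm (\<phi> w)"
    using continuous_attains_inf[OF compact_sphere] by blast
  have "\<phi> w0 \<noteq> 0"
    using w0(1) r by (auto simp: Z_def)
  then show thesis
    using r \<rho> w0 by (intro that[of r "norm (\<phi> w0)"]) auto
qed

lemma norm_poly_le_on_cball:
  fixes p :: "complex poly"
  assumes r: "0 < r" and bd: "\<And>w. norm w = r \<Longrightarrow> norm (poly p w) \<le> C" and z: "norm z \<le> r"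
  shows "norm (poly p z) \<le> C"
proof (rule maximum_modulus_frontier[of "poly p" "cball 0 r"])
  fix w :: complex
  assume "w \<in> frontier (cball 0 r)"
  then show "norm (poly p w) \<le> C"
    using r bd by (simp add: frontier_cball)
qed (use z in \<open>auto intro: holomorphic_intros continuous_intros\<close>)

lemma holomorphic_if_uniform_limit_on_compacts:
  assumes S: "open S" and F: "\<And>n. F n holomorphic_on S"
    and lim: "\<And>K. compact K \<Longrightarrow> K \<subseteq> S \<Longrightarrow> uniform_limit K F g sequentially"
  shows "g holomorphic_on S"
proof (rule holomorphic_uniform_sequence[OF S F])
  fix x
  assume "x \<in> S"
  then obtain d where "0 < d" "cball x d \<subseteq> S"
    using S open_contains_cball by blast
  then show "\<exists>d>0. cball x d \<subseteq> S \<and> uniform_limit (cball x d) F g sequentially"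
    using lim compact_cball by blast
qed

section \<open>Mates\<close>

lemma norm_le_1_if_power_mult_le_1:
  fixes k :: "complex \<Rightarrow> complex"
  assumes hol: "k holomorphic_on ball 0 1"
    and bd: "\<And>w. w \<in> ball 0 1 \<Longrightarrow> norm (w^m * k w) \<le> 1"
    and z: "z \<in> ball 0 1"
  shows "norm (k z) \<le> 1"
proof -
  have le: "norm (k z) \<le> 1 / r^m" if r: "norm z < r" "r < 1" for r :: real
  proof (rule maximum_modulus_frontier[of k "cball 0 r"])
    have r0: "r > 0"
      using r by (meson norm_ge_zero le_less_trans)
    show "k holomorphic_on interior (cball 0 r)"
      using hol by (rule holomorphic_on_subset) (use r in auto)
    show "continuous_on (closure (cball 0 r)) k"
    proof -
      have "cball 0 r \<subseteq> ball (0::complex) 1"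
        using r by auto
      then show ?thesis
        using hol by (auto intro: holomorphic_on_imp_continuous_on holomorphic_on_subset)
    qed
    show "bounded (cball (0::complex) r)" "z \<in> cball 0 r"
      using r by auto
    fix w :: complex
    assume "w \<in> frontier (cball 0 r)"
    then have w: "norm w = r"
      using r0 by (simp add: frontier_cball)
    then have "r^m * norm (k w) \<le> 1"
      using bd[of w] r by (simp add: norm_mult norm_power)
    then show "norm (k w) \<le> 1 / r^m"
      using r0 by (simp add: field_simps)
  qed
  have "((\<lambda>r::real. 1 / r^m) \<longlongrightarrow> 1 / 1^m) (at_left 1)"
    by (intro tendsto_intros) auto
  moreover have "eventually (\<lambda>r. norm z < r \<and> r < 1) (at_left (1::real))"
    using eventually_at_left_real[of "norm z" 1] z by (auto elim!: eventually_mono)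
  ultimately have "norm (k z) \<le> 1 / 1^m"
    by (intro tendsto_le[OF trivial_limit_at_left_real _ tendsto_const])
       (auto elim!: eventually_mono intro: le)
  then show ?thesis
    by simp
qed

lemma cmod_pair_unit_lincomb:
  fixes a b :: complex
  obtains \<alpha> \<beta> where "norm \<alpha>^2 + norm \<beta>^2 = 1" "\<alpha> * a + \<beta> * b = of_real (sqrt (norm a^2 + norm b^2))"
proof (cases "a = 0 \<and> b = 0")
  case True
  then show thesis
    by (intro that[of 1 0]) auto
next
  case False
  define L where "L = sqrt (norm a^2 + norm b^2)"
  have L2: "L^2 = norm a^2 + norm b^2"
    by (simp add: L_def)
  have "0 < norm a^2 + norm b^2"
    using False by (auto intro: add_pos_nonneg add_nonneg_pos)
  then have L: "L > 0"
    by (simp add: L_def)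
  show thesis
  proof (rule that[of "cnj a / of_real L" "cnj b / of_real L"])
    have "norm (cnj a / of_real L)^2 + norm (cnj b / of_real L)^2 = (norm a^2 + norm b^2) / L^2"
      by (simp add: norm_divide power_divide add_divide_distrib)
    then show "norm (cnj a / of_real L)^2 + norm (cnj b / of_real L)^2 = 1"
      using L by (simp flip: L2)
    have "cnj a / of_real L * a + cnj b / of_real L * b = (a * cnj a + b * cnj b) / of_real L"
      by (simp add: field_simps add_divide_distrib)
    also have "a * cnj a + b * cnj b = of_real (L^2)"
      using L2 by (simp only: complex_norm_square[symmetric] of_real_add)
    finally show "cnj a / of_real L * a + cnj b / of_real L * b = of_real (sqrt (norm a^2 + norm b^2))"
      using L unfolding L_def[symmetric] by (simp add: power2_eq_square)
  qed
qed

text \<open>For fixed \<open>z\<close>, a unit vector \<open>(\<alpha>, \<beta>)\<close> with \<open>\<alpha> p z + \<beta> q z = sqrt (\<bar>p z\<bar>\<^sup>2 + \<bar>q z\<bar>\<^sup>2)\<close>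
  combines the pair into the single function \<open>\<alpha> p + \<beta> q\<close>, to which the scalar case applies.\<close>
lemma mate_cancel_power:
  fixes p q :: "complex \<Rightarrow> complex"
  assumes hp: "p holomorphic_on ball 0 1" and hq: "q holomorphic_on ball 0 1"
    and bd: "\<And>w. w \<in> ball 0 1 \<Longrightarrow> norm (w^m * p w)^2 + norm (q w)^2 \<le> 1"
    and z: "z \<in> ball 0 1"
  shows "norm (p z)^2 + norm (q z)^2 \<le> 1"
proof -
  obtain \<alpha> \<beta> where unit: "norm \<alpha>^2 + norm \<beta>^2 = 1"
    and at_z: "\<alpha> * p z + \<beta> * q z = of_real (sqrt (norm (p z)^2 + norm (q z)^2))"
    by (rule cmod_pair_unit_lincomb)
  define k where "k = (\<lambda>w. \<alpha> * p w + \<beta> * q w)"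
  have "norm (k z) \<le> 1"
  proof (rule norm_le_1_if_power_mult_le_1[of k m])
    show "k holomorphic_on ball 0 1"
      unfolding k_def using hp hq by (intro holomorphic_intros)
    fix w :: complex
    assume w: "w \<in> ball 0 1"
    then have "norm (w^m * q w) \<le> norm (q w)"
      by (simp add: norm_mult norm_power power_le_one mult_left_le_one_le)
    then have "norm (w^m * q w)^2 \<le> norm (q w)^2"
      by (simp add: power_mono)
    have "norm (w^m * k w)^2 = norm (\<alpha> * (w^m * p w) + \<beta> * (w^m * q w))^2"
      unfolding k_def by (simp add: algebra_simps)
    also have "\<dots> \<le> norm (w^m * p w)^2 + norm (w^m * q w)^2"
      using cmod_lincomb_sq_le[of \<alpha> "w^m * p w" \<beta> "w^m * q w"] unit by simp
    also have "\<dots> \<le> 1"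
      using bd[OF w] \<open>norm (w^m * q w)^2 \<le> norm (q w)^2\<close> by linarith
    finally show "norm (w^m * k w) \<le> 1"
      by (simp add: power_le_one_iff)
  qed (use z in simp)
  then show ?thesis
    using at_z by (simp add: k_def)
qed

lemma norm_less_1_if_mate:
  fixes p q :: "complex \<Rightarrow> complex"
  assumes hp: "p holomorphic_on ball 0 1" and q0: "q 0 \<noteq> 0"
    and bd: "\<And>w. w \<in> ball 0 1 \<Longrightarrow> norm (p w)^2 + norm (q w)^2 \<le> 1"
    and z: "z \<in> ball 0 1"
  shows "norm (p z) < 1"
proof (rule ccontr)
  assume "\<not> norm (p z) < 1"
  then have ge: "1 \<le> norm (p z)"
    by simp
  have le1: "norm (p w) \<le> 1" if "w \<in> ball 0 1" for w
  proof -
    have "norm (p w)^2 \<le> 1"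
      using bd[OF that] zero_le_power2[of "norm (q w)"] by linarith
    then show ?thesis
      by (simp add: power_le_one_iff)
  qed
  have "p constant_on ball 0 1"
    by (rule maximum_modulus_principle[OF hp _ _ _ _ z]) (use le1 ge in \<open>auto intro: order_trans\<close>)
  then have "p 0 = p z"
    using z unfolding constant_on_def by force
  then have "norm (p 0) = 1"
    using le1[of 0] ge by simp
  then show False
    using bd[of 0] q0 by simp
qed

text \<open>By de Leeuw and Rudin, \<open>f\<close> has such a mate exactly when it is not an extreme point;
  only the easy direction is needed here.\<close>
locale schur_mate =
  fixes f \<phi> :: "complex \<Rightarrow> complex"
  assumes in_schur_class: "f \<in> schur_class"
    and holomorphic_mate: "\<phi> holomorphic_on ball 0 1"
    and mate_0_nonzero: "\<phi> 0 \<noteq> 0"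
    and mate_bound: "\<And>z. z \<in> ball 0 1 \<Longrightarrow> norm (f z)^2 + norm (\<phi> z)^2 \<le> 1"

lemma nonextreme_nonzero_mate:
  assumes "f \<in> schur_class" and "\<not> schur_extreme f"
  obtains \<psi> where "\<psi> holomorphic_on ball 0 1" "\<exists>z\<in>ball 0 1. \<psi> z \<noteq> 0"
    "\<And>z. z \<in> ball 0 1 \<Longrightarrow> norm (f z)^2 + norm (\<psi> z)^2 \<le> 1"
proof -
  obtain g h t where g: "g \<in> schur_class" and h: "h \<in> schur_class"
    and gh: "\<exists>z\<in>ball 0 1. g z \<noteq> h z" and t: "0 < t" "t < 1"
    and f: "\<And>z. z \<in> ball 0 1 \<Longrightarrow> f z = of_real t * g z + of_real (1 - t) * h z"
    using assms unfolding schur_extreme_def by blast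
  define \<psi> where "\<psi> = (\<lambda>z. of_real (sqrt (t * (1 - t))) * (g z - h z))"
  show thesis
  proof
    show "\<psi> holomorphic_on ball 0 1"
      unfolding \<psi>_def using g h by (intro holomorphic_intros) (auto simp: schur_class_def)
    show "\<exists>z\<in>ball 0 1. \<psi> z \<noteq> 0"
      using gh t by (auto simp: \<psi>_def)
    fix z :: complex
    assume z: "z \<in> ball 0 1"
    have "norm (\<psi> z)^2 = t * (1 - t) * norm (g z - h z)^2"
      using t by (simp add: \<psi>_def norm_mult power_mult_distrib)
    then have "norm (f z)^2 + norm (\<psi> z)^2 = t * norm (g z)^2 + (1 - t) * norm (h z)^2"
      using f[OF z] cmod_convex_comb_sq[of t "g z" "h z"] by simp
    also have "\<dots> \<le> t * 1 + (1 - t) * 1"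
      using g h z t
      by (intro add_mono mult_left_mono) (auto simp: schur_class_def abs_square_le_1 less_imp_le)
    finally show "norm (f z)^2 + norm (\<psi> z)^2 \<le> 1"
      by simp
  qed
qed

lemma holomorphic_factor_power_at_0:
  fixes \<psi> :: "complex \<Rightarrow> complex"
  assumes h\<psi>: "\<psi> holomorphic_on ball 0 1" and nz: "\<exists>z\<in>ball 0 1. \<psi> z \<noteq> 0"
  obtains m \<phi> where "\<phi> holomorphic_on ball 0 1" "\<phi> 0 \<noteq> 0" "\<And>w. \<psi> w = w^m * \<phi> w"
proof -
  define m where "m = nat (zorder \<psi> 0)"
  define G where "G = zor_poly \<psi> 0"
  obtain r where r: "r > 0" "cball (0::complex) r \<subseteq> ball 0 1" "G holomorphic_on cball 0 r"
    and fac: "\<And>w. w \<in> cball 0 r \<Longrightarrow> \<psi> w = G w * w^m \<and> G w \<noteq> 0"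
    using zorder_exist_zero[of \<psi> "ball 0 1" 0, OF h\<psi> open_ball connected_ball _ nz, THEN conjunct2]
    unfolding m_def[symmetric] G_def[symmetric] by (metis centre_in_ball diff_zero zero_less_one)
  define \<phi> where "\<phi> = (\<lambda>w. if w = 0 then G 0 else \<psi> w / w^m)"
  have "\<phi> analytic_on ball 0 r"
  proof -
    have "G holomorphic_on ball 0 r"
      using r(3) by (rule holomorphic_on_subset) auto
    then have "\<phi> holomorphic_on ball 0 r"
      by (rule holomorphic_transform) (use fac in \<open>auto simp: \<phi>_def\<close>)
    then show ?thesis
      by (simp add: analytic_on_open)
  qed
  moreover have "\<phi> analytic_on (ball 0 1 - {0})"
  proof -
    have "(\<lambda>w. \<psi> w / w^m) holomorphic_on (ball 0 1 - {0})"
      using h\<psi> by (intro holomorphic_intros) (auto intro: holomorphic_on_subset)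
    then have "\<phi> holomorphic_on (ball 0 1 - {0})"
      by (rule holomorphic_transform) (auto simp: \<phi>_def)
    then show ?thesis
      by (simp add: analytic_on_open open_Diff)
  qed
  moreover have "ball (0::complex) 1 = ball 0 r \<union> (ball 0 1 - {0})"
    using r by auto
  ultimately have "\<phi> analytic_on ball 0 1"
    by (metis analytic_on_Un)
  then have h\<phi>: "\<phi> holomorphic_on ball 0 1"
    by (rule analytic_imp_holomorphic)
  have \<psi>: "\<psi> w = w^m * \<phi> w" for w
    using fac[of 0] r(1) by (cases "w = 0") (auto simp: \<phi>_def)
  show thesis
    using h\<phi> \<psi> fac[of 0] r(1) by (intro that[of \<phi> m]) (auto simp: \<phi>_def)
qed

lemma mate_nonzero_at_0:
  fixes f \<psi> :: "complex \<Rightarrow> complex"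
  assumes hf: "f holomorphic_on ball 0 1"
    and h\<psi>: "\<psi> holomorphic_on ball 0 1" and nz: "\<exists>z\<in>ball 0 1. \<psi> z \<noteq> 0"
    and bd: "\<And>z. z \<in> ball 0 1 \<Longrightarrow> norm (f z)^2 + norm (\<psi> z)^2 \<le> 1"
  obtains \<phi> where "\<phi> holomorphic_on ball 0 1" "\<phi> 0 \<noteq> 0"
    "\<And>z. z \<in> ball 0 1 \<Longrightarrow> norm (f z)^2 + norm (\<phi> z)^2 \<le> 1"
proof -
  obtain m \<phi> where h\<phi>: "\<phi> holomorphic_on ball 0 1" and \<phi>0: "\<phi> 0 \<noteq> 0"
    and \<psi>: "\<And>w. \<psi> w = w^m * \<phi> w"
    using holomorphic_factor_power_at_0[OF h\<psi> nz] by blast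
  show thesis
  proof (rule that[OF h\<phi> \<phi>0])
    show "norm (f z)^2 + norm (\<phi> z)^2 \<le> 1" if "z \<in> ball 0 1" for z
      using mate_cancel_power[OF h\<phi> hf _ that, of m] bd \<psi> by (simp add: add.commute)
  qed
qed

lemma nonextreme_imp_schur_mate:
  assumes "f \<in> schur_class" and "\<not> schur_extreme f"
  obtains \<phi> where "schur_mate f \<phi>"
proof -
  have "f holomorphic_on ball 0 1"
    using assms(1) by (simp add: schur_class_def)
  moreover obtain \<psi> where "\<psi> holomorphic_on ball 0 1" "\<exists>z\<in>ball 0 1. \<psi> z \<noteq> 0"
    "\<And>z. z \<in> ball 0 1 \<Longrightarrow> norm (f z)^2 + norm (\<psi> z)^2 \<le> 1"
    using nonextreme_nonzero_mate[OF assms] by blast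
  ultimately obtain \<phi> where "\<phi> holomorphic_on ball 0 1" "\<phi> 0 \<noteq> 0"
    "\<And>z. z \<in> ball 0 1 \<Longrightarrow> norm (f z)^2 + norm (\<phi> z)^2 \<le> 1"
    using mate_nonzero_at_0 by blast
  then show thesis
    using assms(1) by (intro that[of \<phi>]) (simp add: schur_mate_def)
qed

section \<open>The Schur transform\<close>

definition schur_transform :: "(complex \<Rightarrow> complex) \<Rightarrow> complex \<Rightarrow> complex" where
  "schur_transform h =
     (let m = (\<lambda>w. (h w - h 0) / (1 - cnj (h 0) * h w))
      in (\<lambda>z. if z = 0 then deriv m 0 else m z / z))"

lemma schur_iter_Suc_transform: "schur_iter f (Suc n) = schur_transform (schur_iter f n)"
  by (simp add: schur_transform_def Let_def)

declare schur_iter.simps(2) [simp del]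

lemma schur_class_denominator_nonzero:
  assumes "h \<in> schur_class" "z \<in> ball 0 1"
  shows "1 - cnj (h 0) * h z \<noteq> 0"
proof -
  have "norm (h 0) < 1" "norm (h z) < 1"
    using assms by (auto simp: schur_class_def)
  then have "norm (h 0) * norm (h z) \<le> norm (h 0)"
    by (intro mult_right_le_one_le) auto
  then have "norm (cnj (h 0) * h z) < 1"
    using \<open>norm (h 0) < 1\<close> by (simp add: norm_mult)
  then show ?thesis
    by auto
qed

lemma
  assumes h: "h \<in> schur_class"
  shows holomorphic_schur_transform: "schur_transform h holomorphic_on ball 0 1"
    and mult_schur_transform:
      "z \<in> ball 0 1 \<Longrightarrow> z * schur_transform h z = (h z - h 0) / (1 - cnj (h 0) * h z)"
proof -
  define m where "m = (\<lambda>w. (h w - h 0) / (1 - cnj (h 0) * h w))"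
  have m0: "m 0 = 0"
    by (simp add: m_def)
  have "m holomorphic_on ball 0 1"
    unfolding m_def using h schur_class_denominator_nonzero[OF h]
    by (intro holomorphic_intros) (auto simp: schur_class_def)
  then have "(\<lambda>z. if z = 0 then deriv m 0 else (m z - m 0) / (z - 0)) holomorphic_on ball 0 1"
    by (rule pole_lemma) simp
  moreover have st: "schur_transform h = (\<lambda>z. if z = 0 then deriv m 0 else m z / z)"
    unfolding schur_transform_def Let_def m_def ..
  ultimately show "schur_transform h holomorphic_on ball 0 1"
    using m0 by (simp cong: if_cong)
  show "z * schur_transform h z = (h z - h 0) / (1 - cnj (h 0) * h z)"
    using m0 by (simp add: st) (simp add: m_def)
qed

lemma schur_transform_inverse:
  assumes "h \<in> schur_class" "z \<in> ball 0 1"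
  shows "h z * (1 + cnj (h 0) * (z * schur_transform h z)) = h 0 + z * schur_transform h z"
  using schur_class_denominator_nonzero[OF assms]
  by (simp add: mult_schur_transform[OF assms] field_simps)

lemma schur_transform_factor:
  assumes "h \<in> schur_class" "z \<in> ball 0 1"
  shows "1 + cnj (h 0) * (z * schur_transform h z) = of_real (1 - norm (h 0)^2) / (1 - cnj (h 0) * h z)"
proof -
  have "of_real (1 - norm (h 0)^2) = 1 - cnj (h 0) * h 0"
    by (simp only: of_real_diff of_real_1 complex_norm_square mult.commute)
  then show ?thesis
    using schur_class_denominator_nonzero[OF assms]
    by (simp add: mult_schur_transform[OF assms] field_simps)
qed

text \<open>This is the identity \<open>cmod_moebius_defect\<close> divided by \<open>\<bar>1 - cnj (f 0) f\<bar>\<^sup>2\<close>.\<close>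
lemma (in schur_mate) schur_transform_mate_bound:
  assumes w: "w \<in> ball 0 1"
  shows "norm (w * schur_transform f w)^2 +
           norm (\<phi> w * (1 + cnj (f 0) * (w * schur_transform f w)) / of_real (sqrt (1 - norm (f 0)^2)))^2
         \<le> 1"
proof -
  define c where "c = f 0"
  define s where "s = 1 - norm c^2"
  define D where "D = 1 - cnj c * f w"
  have "norm c < 1"
    using in_schur_class by (simp add: c_def schur_class_def)
  then have s: "0 < s"
    by (simp add: s_def abs_square_less_1)
  have D: "norm D > 0"
    using schur_class_denominator_nonzero[OF in_schur_class w] by (simp add: D_def c_def)
  have "1 + cnj c * (w * schur_transform f w) = of_real s / D"
    unfolding s_def D_def c_def by (rule schur_transform_factor[OF in_schur_class w])
  moreover have "sqrt (1 - norm (f 0)^2) = sqrt s"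
    by (simp add: s_def c_def)
  ultimately have "norm (\<phi> w * (1 + cnj (f 0) * (w * schur_transform f w)) / of_real (sqrt (1 - norm (f 0)^2)))
      = norm (\<phi> w) * (s / norm D) / sqrt s"
    using s by (simp add: norm_mult norm_divide c_def)
  then have "norm (\<phi> w * (1 + cnj (f 0) * (w * schur_transform f w)) / of_real (sqrt (1 - norm (f 0)^2)))^2
      = norm (\<phi> w)^2 * (s / norm D)^2 / s"
    using s by (simp add: power_mult_distrib power_divide)
  also have "\<dots> = norm (\<phi> w)^2 * s / norm D^2"
    using s by (simp add: power2_eq_square)
  also have "\<dots> \<le> (1 - norm (f w)^2) * s / norm D^2"
    using mate_bound[OF w] s by (intro divide_right_mono mult_right_mono) auto
  finally have "norm (w * schur_transform f w)^2 +
        norm (\<phi> w * (1 + cnj (f 0) * (w * schur_transform f w)) / of_real (sqrt (1 - norm (f 0)^2)))^2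
      \<le> (norm (f w - c)^2 + (1 - norm (f w)^2) * s) / norm D^2"
    using mult_schur_transform[OF in_schur_class w]
    by (simp add: norm_divide power_divide add_divide_distrib D_def c_def)
  also have "\<dots> = 1"
    using cmod_moebius_defect[of "f w" c] D by (simp add: D_def s_def)
  finally show ?thesis .
qed

lemma schur_mate_schur_transform:
  assumes "schur_mate h \<psi>"
  shows "schur_mate (schur_transform h)
           (\<lambda>z. \<psi> z * (1 + cnj (h 0) * (z * schur_transform h z)) / of_real (sqrt (1 - norm (h 0)^2)))"
    (is "schur_mate ?h' ?\<psi>'")
proof -
  interpret schur_mate h \<psi>
    by (fact assms)
  have "norm (h 0) < 1"
    using in_schur_class by (simp add: schur_class_def)
  then have sqrt_pos: "sqrt (1 - norm (h 0)^2) > 0"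
    by (simp add: abs_square_less_1)
  have hh': "?h' holomorphic_on ball 0 1"
    by (rule holomorphic_schur_transform[OF in_schur_class])
  have h\<psi>': "?\<psi>' holomorphic_on ball 0 1"
    using holomorphic_mate hh' sqrt_pos by (intro holomorphic_intros) auto
  have \<psi>'0: "?\<psi>' 0 \<noteq> 0"
    using mate_0_nonzero sqrt_pos by simp
  have bound: "norm (?h' z)^2 + norm (?\<psi>' z)^2 \<le> 1" if "z \<in> ball 0 1" for z
    using mate_cancel_power[OF hh' h\<psi>' _ that, of 1] schur_transform_mate_bound by simp
  have "?h' \<in> schur_class"
    using norm_less_1_if_mate[OF hh' \<psi>'0 bound] hh' by (simp add: schur_class_def)
  then show ?thesis
    using h\<psi>' \<psi>'0 bound by unfold_locales
qed

definition schur_defect :: "(complex \<Rightarrow> complex) \<Rightarrow> nat \<Rightarrow> real" where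
  "schur_defect f n = (\<Prod>k<n. 1 - norm (schur_param f k)^2)"

definition schur_denom :: "(complex \<Rightarrow> complex) \<Rightarrow> nat \<Rightarrow> complex \<Rightarrow> complex" where
  "schur_denom f n z = (\<Prod>k<n. 1 + cnj (schur_param f k) * (z * schur_iter f (Suc k) z))"

context schur_mate
begin

lemma schur_iter_mate:
  "schur_mate (schur_iter f n) (\<lambda>z. \<phi> z * schur_denom f n z / of_real (sqrt (schur_defect f n)))"
proof (induction n)
  case 0
  show ?case
    using schur_mate_axioms by (simp add: schur_denom_def schur_defect_def)
next
  case (Suc n)
  show ?case
    using schur_mate_schur_transform[OF Suc.IH]
    by (simp add: schur_iter_Suc_transform[symmetric] schur_param_def[symmetric]
        schur_denom_def schur_defect_def real_sqrt_mult mult_ac)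
qed

lemma schur_iter_in_schur_class: "schur_iter f n \<in> schur_class"
  using schur_mate.in_schur_class[OF schur_iter_mate] .

lemma norm_schur_param_less_1: "norm (schur_param f n) < 1"
  using schur_iter_in_schur_class[of n] by (simp add: schur_param_def schur_class_def)

lemma schur_defect_pos: "0 < schur_defect f n"
  unfolding schur_defect_def
  using norm_schur_param_less_1 by (intro prod_pos) (simp add: abs_square_less_1)

lemma schur_defect_le_1: "schur_defect f n \<le> 1"
  unfolding schur_defect_def
  using norm_schur_param_less_1 by (intro prod_le_1) (simp_all add: abs_square_le_1 less_imp_le)

lemma norm_mate_sq_le_schur_defect:
  assumes "z \<in> ball 0 1"
  shows "norm (\<phi> z * schur_denom f n z)^2 \<le> schur_defect f n"
proof -
  have "norm (\<phi> z * schur_denom f n z / of_real (sqrt (schur_defect f n)))^2 \<le> 1"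
    using schur_mate.mate_bound[OF schur_iter_mate assms, of n] zero_le_power2[of "norm (schur_iter f n z)"]
    by linarith
  then show ?thesis
    using schur_defect_pos[of n] by (simp add: norm_divide power_divide)
qed

lemma norm_mate_mult_schur_denom_le_1:
  assumes "z \<in> ball 0 1"
  shows "norm (\<phi> z * schur_denom f n z) \<le> 1"
proof -
  have "norm (\<phi> z * schur_denom f n z)^2 \<le> 1"
    using norm_mate_sq_le_schur_defect[OF assms, of n] schur_defect_le_1[of n] by linarith
  then show ?thesis
    by (simp add: abs_square_le_1)
qed

lemma mate_0_sq_le_schur_defect_shift:
  "norm (\<phi> 0)^2 \<le> (\<Prod>k<n. 1 - norm (schur_param f (Suc k))^2)"
proof -
  have "norm (\<phi> 0)^2 \<le> schur_defect f (Suc n)"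
    using norm_mate_sq_le_schur_defect[of 0 "Suc n"] by (simp add: schur_denom_def)
  also have "\<dots> = (1 - norm (schur_param f 0)^2) * (\<Prod>k<n. 1 - norm (schur_param f (Suc k))^2)"
    unfolding schur_defect_def by (rule prod.lessThan_Suc_shift)
  also have "\<dots> \<le> (\<Prod>k<n. 1 - norm (schur_param f (Suc k))^2)"
    using norm_schur_param_less_1
    by (intro mult_left_le_one_le prod_nonneg) (auto simp: abs_square_le_1 less_imp_le)
  finally show ?thesis .
qed

end

section \<open>Schur polynomials\<close>

lemma coeff_poly_star: "coeff (poly_star n p) i = (if i \<le> n then cnj (coeff p (n - i)) else 0)"
  unfolding poly_star_def by (simp add: coeff_sum coeff_monom)

lemma degree_poly_star: "degree (poly_star n p) \<le> n"
  by (rule degree_le) (simp add: coeff_poly_star)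

lemma poly_star_add: "poly_star n (p + q) = poly_star n p + poly_star n q"
  by (rule poly_eqI) (simp add: coeff_poly_star)

lemma poly_star_smult: "poly_star n (smult c p) = smult (cnj c) (poly_star n p)"
  by (rule poly_eqI) (simp add: coeff_poly_star)

lemma poly_star_pCons_0: "poly_star (Suc n) (pCons 0 q) = poly_star n q"
  by (rule poly_eqI) (auto simp: coeff_poly_star coeff_pCons Suc_diff_le split: nat.split)

lemma poly_star_Suc:
  assumes "degree p \<le> n"
  shows "poly_star (Suc n) p = pCons 0 (poly_star n p)"
proof (rule poly_eqI)
  fix i
  show "coeff (poly_star (Suc n) p) i = coeff (pCons 0 (poly_star n p)) i"
    using assms by (cases i) (simp_all add: coeff_poly_star coeff_eq_0)
qed

lemma poly_star_poly_star:
  assumes "degree p \<le> n"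
  shows "poly_star n (poly_star n p) = p"
proof (rule poly_eqI)
  fix i
  show "coeff (poly_star n (poly_star n p)) i = coeff p i"
    using assms by (cases "i \<le> n") (auto simp: coeff_poly_star coeff_eq_0)
qed

lemma schur_AB_0: "schur_A f 0 = [:schur_param f 0:]" "schur_B f 0 = 1"
  by (simp_all add: schur_A_def schur_B_def)

lemma schur_AB_Suc:
  "schur_A f (Suc n) = schur_A f n + smult (schur_param f (Suc n)) (pCons 0 (poly_star n (schur_B f n)))"
  "schur_B f (Suc n) = schur_B f n + smult (schur_param f (Suc n)) (pCons 0 (poly_star n (schur_A f n)))"
  by (simp_all add: schur_A_def schur_B_def Let_def)

lemma degree_schur_AB: "degree (schur_A f n) \<le> n \<and> degree (schur_B f n) \<le> n"
proof (induction n)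
  case (Suc n)
  have "degree (smult g (pCons 0 (poly_star n p))) \<le> Suc n" for g p
    using degree_poly_star[of n p] by (metis degree_pCons_le degree_smult_le le_trans Suc_le_mono)
  then show ?case
    unfolding schur_AB_Suc using Suc by (auto intro: degree_add_le)
qed (simp add: schur_AB_0)

lemma poly_star_schur_AB_Suc:
  "poly_star (Suc n) (schur_A f (Suc n))
     = pCons 0 (poly_star n (schur_A f n)) + smult (cnj (schur_param f (Suc n))) (schur_B f n)"
  "poly_star (Suc n) (schur_B f (Suc n))
     = pCons 0 (poly_star n (schur_B f n)) + smult (cnj (schur_param f (Suc n))) (schur_A f n)"
  using degree_schur_AB[of f n]
  by (simp_all add: schur_AB_Suc poly_star_add poly_star_smult poly_star_pCons_0 poly_star_Suc
      poly_star_poly_star)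

definition schur_recursion ::
    "(nat \<Rightarrow> complex) \<Rightarrow> complex \<Rightarrow> (nat \<Rightarrow> complex) \<Rightarrow> (nat \<Rightarrow> complex) \<Rightarrow> bool" where
  "schur_recursion g w x y \<longleftrightarrow>
     (\<forall>n. x (Suc n) = x n + g n * w * y n \<and> y (Suc n) = cnj (g n) * x n + w * y n)"

lemma schur_recursion_schur_AB:
  "schur_recursion (\<lambda>k. schur_param f (Suc k)) z
     (\<lambda>n. poly (schur_B f n) z) (\<lambda>n. poly (poly_star n (schur_A f n)) z)"
  "schur_recursion (\<lambda>k. schur_param f (Suc k)) z
     (\<lambda>n. poly (schur_A f n) z) (\<lambda>n. poly (poly_star n (schur_B f n)) z)"
  unfolding schur_recursion_def poly_star_schur_AB_Suc by (simp_all add: schur_AB_Suc algebra_simps)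

lemma poly_schur_AB_0:
  "poly (schur_A f 0) z = schur_param f 0" "poly (schur_B f 0) z = 1"
  "poly (poly_star 0 (schur_A f 0)) z = cnj (schur_param f 0)" "poly (poly_star 0 (schur_B f 0)) z = 1"
  by (simp_all add: schur_AB_0 poly_star_def poly_monom)

lemma schur_recursion_linear_fractional:
  assumes "schur_recursion g w x y" and "u * (1 + cnj (g n) * (w * v)) = g n + w * v"
  shows "x (Suc n) + w * y (Suc n) * v = (x n + w * y n * u) * (1 + cnj (g n) * (w * v))"
proof -
  have "x (Suc n) + w * y (Suc n) * v = x n * (1 + cnj (g n) * (w * v)) + w * y n * (g n + w * v)"
    using assms(1) unfolding schur_recursion_def by (simp add: algebra_simps)
  also have "\<dots> = (x n + w * y n * u) * (1 + cnj (g n) * (w * v))"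
    unfolding assms(2)[symmetric] by (simp add: algebra_simps)
  finally show ?thesis .
qed

text \<open>The Schur polynomials are the coefficients of the linear fractional map
  \<open>f = (A\<^sub>n + z B\<^sub>n\<^sup>* f\<^sub>n\<^sub>+\<^sub>1) / (B\<^sub>n + z A\<^sub>n\<^sup>* f\<^sub>n\<^sub>+\<^sub>1)\<close>.\<close>
lemma (in schur_mate) schur_AB_linear_fractional:
  assumes z: "z \<in> ball 0 1"
  shows "poly (schur_B f n) z + z * poly (poly_star n (schur_A f n)) z * schur_iter f (Suc n) z
           = schur_denom f (Suc n) z"
    and "poly (schur_A f n) z + z * poly (poly_star n (schur_B f n)) z * schur_iter f (Suc n) z
           = f z * schur_denom f (Suc n) z"
proof -
  have inverse: "schur_iter f k z * (1 + cnj (schur_param f k) * (z * schur_iter f (Suc k) z))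
      = schur_param f k + z * schur_iter f (Suc k) z" for k
    using schur_transform_inverse[OF schur_iter_in_schur_class z]
    by (simp only: schur_iter_Suc_transform schur_param_def)
  have "poly (schur_B f n) z + z * poly (poly_star n (schur_A f n)) z * schur_iter f (Suc n) z
          = schur_denom f (Suc n) z \<and>
        poly (schur_A f n) z + z * poly (poly_star n (schur_B f n)) z * schur_iter f (Suc n) z
          = f z * schur_denom f (Suc n) z"
  proof (induction n)
    case 0
    then show ?case
      using inverse[of 0] by (simp add: poly_schur_AB_0 schur_denom_def algebra_simps)
  next
    case (Suc n)
    then show ?case
      using schur_recursion_linear_fractional[OF schur_recursion_schur_AB(1) inverse[of "Suc n"]]
        schur_recursion_linear_fractional[OF schur_recursion_schur_AB(2) inverse[of "Suc n"]]
      by (simp add: schur_denom_def)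
  qed
  then show "poly (schur_B f n) z + z * poly (poly_star n (schur_A f n)) z * schur_iter f (Suc n) z
           = schur_denom f (Suc n) z"
    and "poly (schur_A f n) z + z * poly (poly_star n (schur_B f n)) z * schur_iter f (Suc n) z
           = f z * schur_denom f (Suc n) z"
    by auto
qed

section \<open>The Schur recursion\<close>

lemma schur_recursion_energy:
  assumes rec: "schur_recursion g w x y" and g: "\<And>n. norm (g n) < 1"
  defines "Q \<equiv> \<lambda>n. \<Prod>k<n. 1 - norm (g k)^2"
  shows "norm (x n)^2 - norm (y n)^2
           = Q n * ((norm (x 0)^2 - norm (y 0)^2) + (1 - norm w^2) * (\<Sum>k<n. norm (y k)^2 / Q k))"
proof (induction n)
  case (Suc n)
  have "Q n > 0"
    unfolding Q_def using g by (intro prod_pos) (simp add: abs_square_less_1)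
  have "norm (x (Suc n))^2 - norm (y (Suc n))^2
      = (1 - norm (g n)^2) * (norm (x n)^2 - norm w^2 * norm (y n)^2)"
    using rec cmod_hyperbolic_step[of "x n" "g n" w "y n"] by (simp add: schur_recursion_def)
  also have "norm (x n)^2 - norm w^2 * norm (y n)^2
      = (norm (x n)^2 - norm (y n)^2) + (1 - norm w^2) * norm (y n)^2"
    by (simp add: algebra_simps)
  also have "\<dots> = Q n * ((norm (x 0)^2 - norm (y 0)^2) + (1 - norm w^2) * (\<Sum>k<Suc n. norm (y k)^2 / Q k))"
    unfolding Suc.IH using \<open>Q n > 0\<close> by (simp add: field_simps)
  finally show ?case
    by (simp add: Q_def mult.assoc)
qed (simp add: Q_def)

lemma schur_recursion_bound:
  assumes rec: "schur_recursion g w x y" and g: "\<And>n. norm (g n) < 1"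
    and q: "0 \<le> q" "\<And>n. q \<le> (\<Prod>k<n. 1 - norm (g k)^2)"
    and w: "norm w \<le> 1" and y0: "norm (y 0) \<le> 1"
  shows "norm (y n)^2 + q * (1 - norm w^2) * (\<Sum>k<n. norm (y k)^2) \<le> norm (x n)^2 + 1"
proof -
  define Q where "Q = (\<lambda>n. \<Prod>k<n. 1 - norm (g k)^2)"
  have Q: "0 < Q k" "Q k \<le> 1" for k
    unfolding Q_def using g
    by (auto intro!: prod_pos prod_le_1 simp: abs_square_less_1 abs_square_le_1 less_imp_le)
  have w2: "0 \<le> 1 - norm w^2"
    using w by (simp add: abs_square_le_1)
  have "(\<Sum>k<n. norm (y k)^2) \<le> (\<Sum>k<n. norm (y k)^2 / Q k)"
    using Q by (intro sum_mono) (simp add: le_divide_eq mult_right_le_one_le order_less_imp_le)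
  then have "q * ((1 - norm w^2) * (\<Sum>k<n. norm (y k)^2))
      \<le> Q n * ((1 - norm w^2) * (\<Sum>k<n. norm (y k)^2 / Q k))"
    using q Q[of n] w2 by (intro mult_mono mult_left_mono mult_nonneg_nonneg sum_nonneg) (auto simp: Q_def)
  moreover have "- 1 \<le> Q n * (norm (x 0)^2 - norm (y 0)^2)"
  proof -
    have "- 1 \<le> norm (x 0)^2 - norm (y 0)^2"
      using zero_le_power2[of "norm (x 0)"] power_le_one[OF norm_ge_zero y0, of 2] by linarith
    then have "Q n * (- 1) \<le> Q n * (norm (x 0)^2 - norm (y 0)^2)"
      using less_imp_le[OF Q(1)] by (rule mult_left_mono)
    then show ?thesis
      using Q[of n] by linarith
  qed
  ultimately show ?thesis
    using schur_recursion_energy[OF rec g, of n] unfolding Q_def by (simp add: algebra_simps)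
qed

lemma schur_recursion_norm_le:
  assumes rec: "schur_recursion g w x y" and g: "\<And>n. norm (g n) < 1"
    and w: "norm w \<le> 1" and y0: "norm (y 0) \<le> 1"
  shows "norm (y n) \<le> norm (x n) + 1"
proof -
  have "0 \<le> (\<Prod>k<m. 1 - norm (g k)^2)" for m
    using g by (intro prod_nonneg) (simp add: abs_square_le_1 less_imp_le)
  then have "norm (y n)^2 \<le> norm (x n)^2 + 1"
    using schur_recursion_bound[OF rec g _ _ w y0, of 0 n] by simp
  also have "\<dots> \<le> (norm (x n) + 1)^2"
    by (simp add: power2_sum)
  finally show ?thesis
    by (rule power2_le_imp_le) simp
qed

lemma schur_recursion_square_sum_le:
  assumes rec: "schur_recursion g w x y" and g: "\<And>n. norm (g n) < 1"
    and q: "0 < q" "\<And>n. q \<le> (\<Prod>k<n. 1 - norm (g k)^2)"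
    and y0: "norm (y 0) \<le> 1" and w: "norm w \<le> r" "r < 1" and x: "norm (x n) \<le> C"
  shows "(\<Sum>k<n. norm (y k)^2) \<le> (C^2 + 1) / (q * (1 - r^2))"
proof -
  have r: "0 \<le> r"
    using w(1) norm_ge_zero order_trans by blast
  have "q * (1 - r^2) > 0"
    using q r w(2) by (simp add: abs_square_less_1)
  have "norm w^2 \<le> r^2"
    using w(1) by (simp add: power_mono)
  then have "q * (1 - r^2) * (\<Sum>k<n. norm (y k)^2) \<le> q * (1 - norm w^2) * (\<Sum>k<n. norm (y k)^2)"
    using q by (intro mult_right_mono mult_left_mono sum_nonneg) auto
  also have "\<dots> \<le> norm (x n)^2 + 1"
    using schur_recursion_bound[OF rec g less_imp_le[OF q(1)] q(2) _ y0, of n] w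
      zero_le_power2[of "norm (y n)"] by linarith
  also have "norm (x n)^2 \<le> C^2"
    using x by (simp add: power_mono)
  finally show ?thesis
    using \<open>q * (1 - r^2) > 0\<close> by (simp add: pos_le_divide_eq mult.commute)
qed

lemma schur_recursion_uniform_convergence:
  fixes x y :: "nat \<Rightarrow> complex \<Rightarrow> complex"
  assumes rec: "\<And>z. z \<in> K \<Longrightarrow> schur_recursion g z (\<lambda>n. x n z) (\<lambda>n. y n z)"
    and g: "\<And>n. norm (g n) < 1"
    and q: "0 < q" "\<And>n. q \<le> (\<Prod>k<n. 1 - norm (g k)^2)"
    and y0: "\<And>z. z \<in> K \<Longrightarrow> norm (y 0 z) \<le> 1"
    and r: "0 \<le> r" "r < 1" "\<And>z. z \<in> K \<Longrightarrow> norm z \<le> r"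
    and C: "\<And>n z. z \<in> K \<Longrightarrow> norm (x n z) \<le> C"
  shows "uniformly_Cauchy_on K x" and "uniform_limit K y (\<lambda>_. 0) sequentially"
proof -
  have z1: "norm z \<le> 1" if "z \<in> K" for z
    using r(2) r(3)[OF that] by simp
  have g2: "summable (\<lambda>k. norm (g k)^2)"
    using g q by (intro summable_if_prod_one_minus_bounded_below) (auto simp: abs_square_le_1 less_imp_le)
  have sum_y: "(\<Sum>k<n. norm (y k z)^2) \<le> (C^2 + 1) / (q * (1 - r^2))" if z: "z \<in> K" for n z
    using schur_recursion_square_sum_le[OF rec[OF z] g q y0[OF z] r(3)[OF z] r(2) C[OF z]] .
  show "uniformly_Cauchy_on K x"
  proof (rule uniformly_Cauchy_on_if_square_summable_steps[OF _ g2 sum_y])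
    fix k z
    assume z: "z \<in> K"
    have "norm (x (Suc k) z - x k z) = norm (g k) * (norm z * norm (y k z))"
      using rec[OF z] by (simp add: schur_recursion_def norm_mult)
    also have "\<dots> \<le> norm (g k) * norm (y k z)"
      using z1[OF z] by (intro mult_left_mono mult_left_le_one_le) auto
    finally show "norm (x (Suc k) z - x k z) \<le> norm (g k) * norm (y k z)" .
  qed
  have "(\<lambda>n. norm (g n)^2) \<longlonglongrightarrow> 0"
    by (rule summable_LIMSEQ_zero[OF g2])
  then have "(\<lambda>n. sqrt (norm (g n)^2)) \<longlonglongrightarrow> sqrt 0"
    by (rule tendsto_real_sqrt)
  then have "(\<lambda>n. C * norm (g n)) \<longlonglongrightarrow> 0"
    using tendsto_mult_right_zero by fastforce
  moreover have "norm (y n z) \<le> C + 1" if z: "z \<in> K" for n z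
    using schur_recursion_norm_le[OF rec[OF z] g z1[OF z] y0[OF z], of n] C[OF z, of n] by simp
  moreover have "norm (y (Suc n) z) \<le> r * norm (y n z) + C * norm (g n)" if z: "z \<in> K" for n z
  proof -
    have "norm (y (Suc n) z) \<le> norm (g n) * norm (x n z) + norm z * norm (y n z)"
      using rec[OF z] norm_triangle_ineq[of "cnj (g n) * x n z" "z * y n z"]
      by (simp add: schur_recursion_def norm_mult)
    also have "\<dots> \<le> norm (g n) * C + r * norm (y n z)"
      using C[OF z] r(3)[OF z] by (intro add_mono mult_left_mono mult_right_mono) auto
    finally show ?thesis
      by (simp add: algebra_simps)
  qed
  ultimately show "uniform_limit K y (\<lambda>_. 0) sequentially"
    by (intro uniform_limit_zero_if_contracting[OF r(1,2)])
qed

section \<open>Convergence of the Schur polynomials\<close>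

context schur_mate
begin

lemma schur_AB_bounded_on_circle:
  assumes r: "r < 1" and \<mu>: "0 < \<mu>" "\<And>w. norm w = r \<Longrightarrow> \<mu> \<le> norm (\<phi> w)" and w: "norm w = r"
  shows "norm (poly (schur_A f n) w) \<le> (1 / \<mu> + 1) / (1 - r)"
    and "norm (poly (schur_B f n) w) \<le> (1 / \<mu> + 1) / (1 - r)"
proof -
  have wD: "w \<in> ball 0 1" and w1: "norm w \<le> 1"
    using w r by auto
  have "\<mu> * norm (schur_denom f (Suc n) w) \<le> norm (\<phi> w) * norm (schur_denom f (Suc n) w)"
    using \<mu>(2)[OF w] by (rule mult_right_mono) simp
  also have "\<dots> \<le> 1"
    using norm_mate_mult_schur_denom_le_1[OF wD, of "Suc n"] by (simp add: norm_mult)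
  finally have E: "norm (schur_denom f (Suc n) w) \<le> 1 / \<mu>"
    using \<mu>(1) by (simp add: field_simps)
  have "norm (f w) \<le> 1"
    using in_schur_class wD by (simp add: schur_class_def less_imp_le)
  then have fE: "norm (f w * schur_denom f (Suc n) w) \<le> 1 / \<mu>"
    using E unfolding norm_mult by (meson mult_left_le_one_le norm_ge_zero order_trans)
  have F: "norm (schur_iter f (Suc n) w) \<le> 1"
    using schur_iter_in_schur_class wD by (simp add: schur_class_def less_imp_le)
  have bound: "norm x \<le> (1 / \<mu> + 1) / (1 - r)"
    if "x + w * y * schur_iter f (Suc n) w = e" "norm y \<le> norm x + 1" "norm e \<le> 1 / \<mu>" for x y e
  proof -
    have "norm x \<le> (norm e + 1) / (1 - r)"
      using norm_le_absorb[OF that(1,2) F _ r] w by simp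
    also have "\<dots> \<le> (1 / \<mu> + 1) / (1 - r)"
      using that(3) r by (intro divide_right_mono) auto
    finally show ?thesis .
  qed
  have g: "norm (schur_param f (Suc k)) < 1" for k
    by (rule norm_schur_param_less_1)
  show "norm (poly (schur_A f n) w) \<le> (1 / \<mu> + 1) / (1 - r)"
  proof (rule bound[OF schur_AB_linear_fractional(2)[OF wD] _ fE])
    show "norm (poly (poly_star n (schur_B f n)) w) \<le> norm (poly (schur_A f n) w) + 1"
      using schur_recursion_norm_le[OF schur_recursion_schur_AB(2) g w1] by (simp add: poly_schur_AB_0)
  qed
  show "norm (poly (schur_B f n) w) \<le> (1 / \<mu> + 1) / (1 - r)"
  proof (rule bound[OF schur_AB_linear_fractional(1)[OF wD] _ E])
    show "norm (poly (poly_star n (schur_A f n)) w) \<le> norm (poly (schur_B f n) w) + 1"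
      using schur_recursion_norm_le[OF schur_recursion_schur_AB(1) g w1] norm_schur_param_less_1[of 0]
      by (simp add: poly_schur_AB_0)
  qed
qed

lemma schur_AB_bounded_on_compact:
  assumes "compact K" "K \<subseteq> ball 0 1"
  obtains r C where "0 \<le> r" "r < 1" "\<And>z. z \<in> K \<Longrightarrow> norm z \<le> r"
    "\<And>n z. z \<in> K \<Longrightarrow> norm (poly (schur_A f n) z) \<le> C \<and> norm (poly (schur_B f n) z) \<le> C"
proof -
  obtain r0 where r0: "r0 < 1" "K \<subseteq> cball 0 r0"
    using compact_subset_ball_imp_cball[OF assms] .
  obtain r \<mu> where r: "r0 \<le> r" "0 < r" "r < 1"
    and \<mu>: "0 < \<mu>" "\<And>w. norm w = r \<Longrightarrow> \<mu> \<le> norm (\<phi> w)"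
    using holomorphic_bounded_below_on_circle[OF holomorphic_mate mate_0_nonzero r0(1)] by blast
  show thesis
  proof (rule that[of r "(1 / \<mu> + 1) / (1 - r)"])
    show "norm z \<le> r" if "z \<in> K" for z
      using r0(2) r(1) that by auto
    then show "norm (poly (schur_A f n) z) \<le> (1 / \<mu> + 1) / (1 - r) \<and>
        norm (poly (schur_B f n) z) \<le> (1 / \<mu> + 1) / (1 - r)" if "z \<in> K" for n z
      using schur_AB_bounded_on_circle[OF r(3) \<mu>] r(2) that by (blast intro: norm_poly_le_on_cball)
  qed (use r in auto)
qed

lemma schur_AB_uniform_limits:
  assumes "compact K" "K \<subseteq> ball 0 1"
  shows "uniform_limit K (\<lambda>n. poly (schur_A f n)) (\<lambda>z. lim (\<lambda>n. poly (schur_A f n) z)) sequentially"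
    and "uniform_limit K (\<lambda>n. poly (schur_B f n)) (\<lambda>z. lim (\<lambda>n. poly (schur_B f n) z)) sequentially"
    and "uniform_limit K (\<lambda>n. poly (poly_star n (schur_A f n))) (\<lambda>_. 0) sequentially"
    and "uniform_limit K (\<lambda>n. poly (poly_star n (schur_B f n))) (\<lambda>_. 0) sequentially"
proof -
  obtain r C where r: "0 \<le> r" "r < 1" "\<And>z. z \<in> K \<Longrightarrow> norm z \<le> r"
    and C: "\<And>n z. z \<in> K \<Longrightarrow> norm (poly (schur_A f n) z) \<le> C \<and> norm (poly (schur_B f n) z) \<le> C"
    using schur_AB_bounded_on_compact[OF assms] by blast
  have q: "0 < norm (\<phi> 0)^2"
    using mate_0_nonzero by simp
  note convergence = schur_recursion_uniform_convergence[where K = K and r = r and C = C,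
      OF _ norm_schur_param_less_1 q mate_0_sq_le_schur_defect_shift _ r]
  have "uniformly_Cauchy_on K (\<lambda>n. poly (schur_B f n))"
    and "uniform_limit K (\<lambda>n. poly (poly_star n (schur_A f n))) (\<lambda>_. 0) sequentially"
    using convergence[where x = "\<lambda>n. poly (schur_B f n)" and y = "\<lambda>n. poly (poly_star n (schur_A f n))"]
      schur_recursion_schur_AB(1) C norm_schur_param_less_1[of 0] by (simp_all add: poly_schur_AB_0)
  moreover have "uniformly_Cauchy_on K (\<lambda>n. poly (schur_A f n))"
    and "uniform_limit K (\<lambda>n. poly (poly_star n (schur_B f n))) (\<lambda>_. 0) sequentially"
    using convergence[where x = "\<lambda>n. poly (schur_A f n)" and y = "\<lambda>n. poly (poly_star n (schur_B f n))"]
      schur_recursion_schur_AB(2) C by (simp_all add: poly_schur_AB_0)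
  ultimately show "uniform_limit K (\<lambda>n. poly (schur_A f n)) (\<lambda>z. lim (\<lambda>n. poly (schur_A f n) z)) sequentially"
    and "uniform_limit K (\<lambda>n. poly (schur_B f n)) (\<lambda>z. lim (\<lambda>n. poly (schur_B f n) z)) sequentially"
    and "uniform_limit K (\<lambda>n. poly (poly_star n (schur_A f n))) (\<lambda>_. 0) sequentially"
    and "uniform_limit K (\<lambda>n. poly (poly_star n (schur_B f n))) (\<lambda>_. 0) sequentially"
    by (auto dest: Cauchy_uniformly_convergent simp: uniformly_convergent_uniform_limit_iff)
qed

lemma schur_limit_eq:
  assumes z: "z \<in> ball 0 1"
  shows "lim (\<lambda>n. poly (schur_A f n) z) = lim (\<lambda>n. poly (schur_B f n) z) * f z"
proof -
  define a where "a = (\<lambda>n. poly (schur_A f n) z)"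
  define b where "b = (\<lambda>n. poly (schur_B f n) z)"
  define a' where "a' = (\<lambda>n. poly (poly_star n (schur_A f n)) z)"
  define b' where "b' = (\<lambda>n. poly (poly_star n (schur_B f n)) z)"
  define F where "F = (\<lambda>n. schur_iter f (Suc n) z)"
  have "compact {z}" "{z} \<subseteq> ball 0 1"
    using z by auto
  note limits = schur_AB_uniform_limits[OF this, THEN tendsto_uniform_limitI, OF singletonI]
  have a: "a \<longlonglongrightarrow> lim a" and b: "b \<longlonglongrightarrow> lim b" and a': "a' \<longlonglongrightarrow> 0" and b': "b' \<longlonglongrightarrow> 0"
    using limits by (simp_all add: a_def b_def a'_def b'_def)
  have diff: "a n - f z * b n = z * F n * (f z * a' n - b' n)" for n
  proof -
    have "a n = f z * (b n + z * a' n * F n) - z * b' n * F n"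
      using schur_AB_linear_fractional[OF z, of n]
      by (simp add: a_def b_def a'_def b'_def F_def eq_diff_eq)
    then show ?thesis
      by (simp add: algebra_simps)
  qed
  have bound: "\<forall>n. norm (a n - f z * b n) \<le> norm (f z * a' n) + norm (b' n)"
  proof
    fix n
    have "norm z * norm (F n) \<le> 1"
      using z schur_iter_in_schur_class[of "Suc n"]
      by (intro mult_le_one) (auto simp: schur_class_def F_def less_imp_le)
    then have "norm (a n - f z * b n) \<le> norm (f z * a' n - b' n)"
      unfolding diff norm_mult by (simp add: mult_left_le_one_le)
    also have "\<dots> \<le> norm (f z * a' n) + norm (b' n)"
      by (rule norm_triangle_ineq4)
    finally show "norm (a n - f z * b n) \<le> norm (f z * a' n) + norm (b' n)" .
  qed
  have "(\<lambda>n. norm (f z * a' n) + norm (b' n)) \<longlonglongrightarrow> norm (f z * 0) + norm (0::complex)"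
    by (intro tendsto_intros a' b')
  then have "(\<lambda>n. a n - f z * b n) \<longlonglongrightarrow> 0"
    by (intro Lim_null_comparison[OF always_eventually[OF bound]]) simp
  then have "(\<lambda>n. (a n - f z * b n) + f z * b n) \<longlonglongrightarrow> 0 + f z * lim b"
    using tendsto_mult[OF tendsto_const b] by (rule tendsto_add)
  then have "a \<longlonglongrightarrow> lim b * f z"
    by (simp add: mult.commute)
  then show ?thesis
    using a unfolding a_def b_def by (metis LIMSEQ_unique)
qed

end

theorem theorem10:
  fixes f :: "complex \<Rightarrow> complex"
  assumes "f \<in> schur_class"
    and "\<not> schur_extreme f"
  shows "\<exists>a b. a holomorphic_on ball 0 1 \<and> b holomorphic_on ball 0 1 \<and>
     (\<forall>K. compact K \<and> K \<subseteq> ball 0 1 \<longrightarrow>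
        uniform_limit K (\<lambda>n. poly (schur_A f n)) a sequentially \<and>
        uniform_limit K (\<lambda>n. poly (schur_B f n)) b sequentially) \<and>
     (\<forall>z\<in>ball 0 1. a z = b z * f z) \<and>
     (\<forall>K. compact K \<and> K \<subseteq> ball 0 1 \<longrightarrow>
        uniform_limit K (\<lambda>n. poly (poly_star n (schur_A f n))) (\<lambda>_. 0) sequentially \<and>
        uniform_limit K (\<lambda>n. poly (poly_star n (schur_B f n))) (\<lambda>_. 0) sequentially)"
proof -
  obtain \<phi> where "schur_mate f \<phi>"
    using nonextreme_imp_schur_mate[OF assms] .
  then interpret schur_mate f \<phi> .
  define a where "a = (\<lambda>z. lim (\<lambda>n. poly (schur_A f n) z))"
  define b where "b = (\<lambda>z. lim (\<lambda>n. poly (schur_B f n) z))"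
  have "a holomorphic_on ball 0 1"
    unfolding a_def
    by (rule holomorphic_if_uniform_limit_on_compacts[OF open_ball _ schur_AB_uniform_limits(1)])
      (intro holomorphic_intros)
  moreover have "b holomorphic_on ball 0 1"
    unfolding b_def
    by (rule holomorphic_if_uniform_limit_on_compacts[OF open_ball _ schur_AB_uniform_limits(2)])
      (intro holomorphic_intros)
  ultimately show ?thesis
    using schur_AB_uniform_limits schur_limit_eq unfolding a_def b_def by blast
qed

end
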